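(* Let $N\ge2$ and, for $0\le k\le N-1$, let $H_N(k)=\sum_{i=k+1}^{N-1}\frac1i$ (so $H_N(N-1)=0$). For $\theta>0$ define $$\kappa_N(\theta)=\begin{cases}0 & \text{if } 0<\theta\le H_N(0)^{-1},\\ k & \text{if } H_N(k-1)^{-1}<\theta\le H_N(k)^{-1}\text{ for some }1\le k\le N-2,\\ N-1&\text{if }\theta>N-1.\end{cases}$$ Then for every $\theta>0$: - $W(N,\kappa_N(\theta))\ge W(N,k)$ for all $0\le k\le N-1$; - in the weighted game of best choice with the Ewens distribution (probability of $\pi\in\mathfrak S_N$ proportional to $\theta^{\mathrm{lrm}(\pi)}$), the positional strategy that rejects the first $\kappa_N(\theta)$ candidates and then accepts the next left-to-right maximum maximizes the probability of winning among all strategies. Moreover, $\kappa_N$ is a nondecreasing function of $\theta$.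
   Context: Permutations of $\{1,\dots,N\}$ are written in one-line notation; $\mathfrak S_N$ is the set of all of them. An entry $\pi_j$ is a left-to-right maximum if $\pi_j>\pi_i$ for all $i<j$; $\mathrm{lrm}(\pi)$ is the number of left-to-right maxima. The weighted game of best choice: $\pi\in\mathfrak S_N$ is drawn with probability proportional to $\theta^{\mathrm{lrm}(\pi)}$. At step $i$ the player sees only the relative order of $\pi_1,\dots,\pi_i$ and decides to accept candidate $i$ (ending the game) or reject it irrevocably; candidate $N$ is accepted if all others were rejected. The player wins iff the accepted candidate $i$ has $\pi_i=N$. For $0\le k\le N-1$, $\pi$ is $k$-winnable if the first index $j>k$ with $\pi_j$ a left-to-right maximum has $\pi_j=N$. $W(N,k)=\sum_{k\text{-winnable }\pi}\theta^{\mathrm{lrm}(\pi)}$, so $W(N,k)/\sum_{\pi\in\mathfrak S_N}\theta^{\mathrm{lrm}(\pi)}$ is the winning probability of the positional strategy that rejects the first $k$ candidates and accepts the next left-to-right maximum. *)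

theory Defs
  imports Complex_Main "HOL-Combinatorics.Multiset_Permutations"
begin

text \<open>Permutations of {1..N} in one-line notation, as lists; list position j (0-based)
  holds the entry pi_(j+1).\<close>
definition perms :: "nat \<Rightarrow> nat list set" where
  "perms N = permutations_of_set {1..N}"

definition is_lrm :: "nat list \<Rightarrow> nat \<Rightarrow> bool" where
  "is_lrm xs j \<longleftrightarrow> j < length xs \<and> (\<forall>i<j. xs ! i < xs ! j)"

definition lrm :: "nat list \<Rightarrow> nat" where
  "lrm xs = card {j. j < length xs \<and> is_lrm xs j}"

text \<open>k-winnable: the first index j > k (1-based) carrying a left-to-right maximum
  has pi_j = N.  In 0-based positions: first position j \<ge> k.\<close>
definition k_winnable :: "nat \<Rightarrow> nat \<Rightarrow> nat list \<Rightarrow> bool" where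
  "k_winnable N k xs \<longleftrightarrow>
     (\<exists>j. k \<le> j \<and> j < N \<and> is_lrm xs j \<and> xs ! j = N \<and>
          (\<forall>i. k \<le> i \<and> i < j \<longrightarrow> \<not> is_lrm xs i))"

definition W :: "real \<Rightarrow> nat \<Rightarrow> nat \<Rightarrow> real" where
  "W \<theta> N k = (\<Sum>xs\<in>{xs \<in> perms N. k_winnable N k xs}. \<theta> ^ lrm xs)"

definition rel_pattern :: "nat list \<Rightarrow> nat list" where
  "rel_pattern ys = map (\<lambda>y. card {z \<in> set ys. z \<le> y}) ys"

text \<open>A (deterministic) strategy decides, from the relative order of the first i
  candidates (a list of length i), whether to accept candidate i.\<close>
type_synonym strategy = "nat list \<Rightarrow> bool"

text \<open>Index (1-based) of the accepted candidate; candidate N is accepted if all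
  earlier ones were rejected.\<close>
definition stop_index :: "nat \<Rightarrow> strategy \<Rightarrow> nat list \<Rightarrow> nat" where
  "stop_index N s xs = (LEAST i. 1 \<le> i \<and> (i = N \<or> s (rel_pattern (take i xs))))"

definition wins :: "nat \<Rightarrow> strategy \<Rightarrow> nat list \<Rightarrow> bool" where
  "wins N s xs \<longleftrightarrow> xs ! (stop_index N s xs - 1) = N"

definition win_prob :: "real \<Rightarrow> nat \<Rightarrow> strategy \<Rightarrow> real" where
  "win_prob \<theta> N s =
     (\<Sum>xs\<in>{xs \<in> perms N. wins N s xs}. \<theta> ^ lrm xs) / (\<Sum>xs\<in>perms N. \<theta> ^ lrm xs)"

text \<open>Positional strategy: reject the first k candidates, then accept the next
  left-to-right maximum (the current candidate has the largest relative rank).\<close>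
definition pos_strategy :: "nat \<Rightarrow> strategy" where
  "pos_strategy k p \<longleftrightarrow> k < length p \<and> last p = length p"

definition H :: "nat \<Rightarrow> nat \<Rightarrow> real" where
  "H N k = (\<Sum>i\<in>{k+1..N-1}. 1 / real i)"

definition kappa :: "nat \<Rightarrow> real \<Rightarrow> nat" where
  "kappa N \<theta> =
     (if \<theta> \<le> 1 / H N 0 then 0
      else if \<theta> > real N - 1 then N - 1
      else (THE k. 1 \<le> k \<and> k \<le> N - 2 \<and> 1 / H N (k - 1) < \<theta> \<and> \<theta> \<le> 1 / H N k))"

end

theory Submission
  imports Defs
begin

text \<open>Encode a permutation by its rank code: entry j counts the earlier entries below
  the j-th one, so it ranges over 0..j and equals j exactly at a left-to-right maximum.
  This is a bijection onto a product of ranges under which the Ewens weight factorises,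
  and a strategy sees exactly a prefix of the code. The game thus becomes a finite-horizon
  optimal stopping problem. Its Bellman value bounds every strategy; by backward induction,
  continuing from a record at position i with the "next record" rule is worth th * H N i
  times the reward for stopping, so stopping is optimal exactly for i from kappa on, and
  the positional strategy with threshold kappa attains the Bellman value.\<close>

section \<open>Harmonic tails and the threshold kappa\<close>

lemma H_pos: "i + 2 \<le> N \<Longrightarrow> 0 < H N i"
proof -
  assume "i + 2 \<le> N"
  then have "1 / real (i + 1) \<le> H N i"
    unfolding H_def using sum_mono2[of "{i+1..N-1}" "{i+1}" "\<lambda>j. 1 / real j"] by auto
  moreover have "0 < 1 / real (i + 1)" by simp
  ultimately show ?thesis by linarith
qed

lemma H_antimono: "i \<le> j \<Longrightarrow> H N j \<le> H N i"
  unfolding H_def by (intro sum_mono2) auto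

lemma H_Suc: "Suc i < N \<Longrightarrow> H N i = 1 / real (Suc i) + H N (Suc i)"
proof -
  assume "Suc i < N"
  then have "{i+1..N-1} = insert (Suc i) {Suc i + 1..N-1}" by auto
  then show ?thesis unfolding H_def by simp
qed

lemma H_last: "H N (N - 1) = 0"
  unfolding H_def by simp

lemma H_second_last: "2 \<le> N \<Longrightarrow> H N (N - 2) = 1 / (real N - 1)"
proof -
  assume "2 \<le> N"
  then have "{N - 2 + 1..N - 1} = {N - 1}" by auto
  then show ?thesis unfolding H_def using \<open>2 \<le> N\<close> by (simp add: of_nat_diff)
qed

lemma inverse_H_mono: "i \<le> j \<Longrightarrow> j + 2 \<le> N \<Longrightarrow> 1 / H N i \<le> 1 / H N j"
  using H_pos[of j N] H_antimono[of i j N] by (intro divide_left_mono) auto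

lemma threshold_of_bracket:
  assumes "2 \<le> N" "1 \<le> k" "k \<le> N - 2" "1 / H N (k - 1) < th" "th \<le> 1 / H N k"
  shows "\<forall>i. i \<le> N - 2 \<longrightarrow> (i < k \<longleftrightarrow> 1 / H N i < th)"
proof (intro allI impI iffI)
  fix i assume "i \<le> N - 2" "i < k"
  then have "1 / H N i \<le> 1 / H N (k - 1)" using assms by (intro inverse_H_mono) auto
  then show "1 / H N i < th" using assms by linarith
next
  fix i assume i: "i \<le> N - 2" "1 / H N i < th"
  show "i < k"
  proof (rule ccontr)
    assume "\<not> i < k"
    then have "1 / H N k \<le> 1 / H N i" using assms i by (intro inverse_H_mono) auto
    then show False using assms i by linarith
  qed
qed

lemma threshold_unique:
  fixes N k k' :: nat
  assumes "k \<le> N - 1" "k' \<le> N - 1"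
    and "\<forall>i. i \<le> N - 2 \<longrightarrow> (i < k \<longleftrightarrow> P i)" "\<forall>i. i \<le> N - 2 \<longrightarrow> (i < k' \<longleftrightarrow> P i)"
  shows "k = k'"
proof -
  have "\<not> k < k'" if "k \<le> N - 1" "k' \<le> N - 1" "\<forall>i. i \<le> N - 2 \<longrightarrow> (i < k \<longleftrightarrow> P i)"
      "\<forall>i. i \<le> N - 2 \<longrightarrow> (i < k' \<longleftrightarrow> P i)" for k k' :: nat
  proof
    assume "k < k'"
    then have "k \<le> N - 2" using that by linarith
    then show False using that \<open>k < k'\<close> by auto
  qed
  then show ?thesis using assms by (meson linorder_neqE_nat)
qed

lemma bracket_exists:
  assumes "\<not> th \<le> 1 / H N 0" "th \<le> 1 / H N m"
  obtains c where "1 \<le> c" "c \<le> m" "1 / H N (c - 1) < th" "th \<le> 1 / H N c"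
proof -
  define c where "c = (LEAST i. th \<le> 1 / H N i)"
  have c: "th \<le> 1 / H N c" "c \<le> m"
    using assms(2) unfolding c_def by (auto intro: LeastI Least_le)
  then have "c \<noteq> 0" using assms(1) by metis
  moreover have "\<not> th \<le> 1 / H N (c - 1)"
    unfolding c_def by (rule not_less_Least) (use \<open>c \<noteq> 0\<close> c_def in auto)
  ultimately show ?thesis using c that[of c] by simp
qed

lemma kappa_char:
  assumes N: "2 \<le> N" and th: "0 < th"
  shows "kappa N th \<le> N - 1 \<and> (\<forall>i. i \<le> N - 2 \<longrightarrow> (i < kappa N th \<longleftrightarrow> 1 / H N i < th))"
proof (cases "th \<le> 1 / H N 0")
  case True
  have "\<not> 1 / H N i < th" if "i \<le> N - 2" for i
    using inverse_H_mono[of 0 i N] that N True by linarith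
  then show ?thesis using True by (simp add: kappa_def)
next
  case above_first: False
  show ?thesis
  proof (cases "real N - 1 < th")
    case True
    have "1 / H N i < th" if "i \<le> N - 2" for i
    proof -
      have "1 / H N i \<le> 1 / H N (N - 2)" using inverse_H_mono[of i "N - 2" N] that N by simp
      then show ?thesis using H_second_last[OF N] True by simp
    qed
    moreover have "\<forall>i. i \<le> N - 2 \<longrightarrow> i < N - 1" using N by auto
    ultimately show ?thesis using above_first True by (simp add: kappa_def)
  next
    case False
    then have "th \<le> 1 / H N (N - 2)" using H_second_last[OF N] by simp
    then obtain c where c: "1 \<le> c" "c \<le> N - 2" "1 / H N (c - 1) < th" "th \<le> 1 / H N c"
      using bracket_exists above_first by blast
    define bracket where "bracket k \<longleftrightarrow>
      1 \<le> k \<and> k \<le> N - 2 \<and> 1 / H N (k - 1) < th \<and> th \<le> 1 / H N k" for k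
    have "bracket c" using c unfolding bracket_def by simp
    have char: "\<forall>i. i \<le> N - 2 \<longrightarrow> (i < k \<longleftrightarrow> 1 / H N i < th)" if "bracket k" for k
      using that N threshold_of_bracket unfolding bracket_def by blast
    have "kappa N th = (THE k. bracket k)"
      using above_first False by (simp add: kappa_def bracket_def)
    also have "\<dots> = c"
    proof (rule the_equality)
      fix k assume "bracket k"
      then show "k = c"
        using threshold_unique[OF _ _ char char] \<open>bracket c\<close> N unfolding bracket_def by auto
    qed fact
    finally show ?thesis using char[OF \<open>bracket c\<close>] c N by simp
  qed
qed

lemma kappa_less:
  assumes "2 \<le> N" "0 < th"
  shows "kappa N th < N"
  using kappa_char[OF assms] assms(1) by linarith

lemma less_kappa_iff:
  assumes N: "2 \<le> N" and th: "0 < th" and i: "Suc i < N"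
  shows "i < kappa N th \<longleftrightarrow> 1 < th * H N i"
proof -
  have "0 < H N i" using H_pos i by simp
  then have "1 / H N i < th \<longleftrightarrow> 1 < th * H N i" by (simp add: divide_less_eq)
  then show ?thesis using kappa_char[OF N th] i by simp
qed

lemma kappa_mono:
  assumes N: "2 \<le> N" and "0 < th1" "th1 \<le> th2"
  shows "kappa N th1 \<le> kappa N th2"
proof (rule ccontr)
  assume "\<not> ?thesis"
  then have lt: "kappa N th2 < kappa N th1" by simp
  then have "Suc (kappa N th2) < N" using kappa_less[OF N \<open>0 < th1\<close>] by linarith
  then have "1 < th1 * H N (kappa N th2)"
    using less_kappa_iff[OF N \<open>0 < th1\<close>] lt by blast
  also have "\<dots> \<le> th2 * H N (kappa N th2)"
    using assms H_pos[of "kappa N th2" N] \<open>Suc (kappa N th2) < N\<close> by (intro mult_right_mono) auto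
  finally show False
    using less_kappa_iff[of N th2 "kappa N th2"] N assms \<open>Suc (kappa N th2) < N\<close> by auto
qed

section \<open>Optimal stopping on rank codes\<close>

context
  fixes N :: nat and th :: real
begin

text \<open>Positions are 0-based. A code at stage i lists the ranks of candidates i, ..., N - 1:
  entry j counts the earlier candidates beaten by candidate i + j, so it is at most i + j,
  with equality exactly at a record.\<close>
definition codes :: "nat \<Rightarrow> nat list set" where
  "codes i = {c. length c = N - i \<and> (\<forall>j<N - i. c ! j \<le> i + j)}"

definition code_weight :: "nat \<Rightarrow> nat list \<Rightarrow> real" where
  "code_weight i c = (\<Prod>j<length c. if c ! j = i + j then th else 1)"

definition stop_time :: "(nat list \<Rightarrow> bool) \<Rightarrow> nat \<Rightarrow> nat list \<Rightarrow> nat" where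
  "stop_time t i rs = (LEAST j. i \<le> j \<and> (j = N - 1 \<or> t (take (Suc j) rs)))"

definition last_record :: "nat list \<Rightarrow> nat \<Rightarrow> bool" where
  "last_record rs j \<longleftrightarrow> rs ! j = j \<and> (\<forall>l. j < l \<and> l < N \<longrightarrow> rs ! l \<noteq> l)"

definition success_weight :: "(nat list \<Rightarrow> bool) \<Rightarrow> nat list \<Rightarrow> real" where
  "success_weight t h = (\<Sum>c\<in>codes (length h).
     code_weight (length h) c * of_bool (last_record (h @ c) (stop_time t (length h) (h @ c))))"

definition recordless_weight :: "nat \<Rightarrow> real" where
  "recordless_weight m = (\<Sum>c\<in>codes m. code_weight m c * of_bool (\<forall>j<length c. c ! j \<noteq> m + j))"

lemma finite_codes: "finite (codes i)"
proof (rule finite_subset)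
  show "codes i \<subseteq> {c. set c \<subseteq> {..N} \<and> length c = N - i}"
    unfolding codes_def by (force simp: in_set_conv_nth)
qed (rule finite_lists_length_eq, simp)

lemma codes_ge: "N \<le> i \<Longrightarrow> codes i = {[]}"
  by (auto simp: codes_def)

lemma codes_Suc: "i < N \<Longrightarrow> codes i = (\<lambda>(r, c). r # c) ` ({..i} \<times> codes (Suc i))"
proof (intro equalityI subsetI)
  fix x assume i: "i < N" and x: "x \<in> codes i"
  then obtain r c where x_eq: "x = r # c" unfolding codes_def by (cases x) auto
  have "r \<le> i" using x i x_eq unfolding codes_def by (auto elim!: allE[of _ 0])
  moreover have "c \<in> codes (Suc i)"
  proof -
    have "c ! j \<le> Suc i + j" if "j < N - Suc i" for j
      using x x_eq that unfolding codes_def by (auto dest!: spec[of _ "Suc j"])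
    then show ?thesis using x x_eq unfolding codes_def by auto
  qed
  ultimately show "x \<in> (\<lambda>(r, c). r # c) ` ({..i} \<times> codes (Suc i))" using x_eq by auto
next
  fix x assume i: "i < N" and "x \<in> (\<lambda>(r, c). r # c) ` ({..i} \<times> codes (Suc i))"
  then obtain r c where x_eq: "x = r # c" "r \<le> i" "c \<in> codes (Suc i)" by auto
  then show "x \<in> codes i" using i unfolding codes_def by (auto simp: nth_Cons split: nat.split)
qed

lemma sum_codes_Suc:
  assumes "i < N"
  shows "(\<Sum>c\<in>codes i. g c) = (\<Sum>r\<le>i. \<Sum>c\<in>codes (Suc i). g (r # c))"
proof -
  have "inj_on (\<lambda>(r, c). r # c) ({..i} \<times> codes (Suc i))"
    by (auto simp: inj_on_def)
  then have "(\<Sum>c\<in>codes i. g c) = (\<Sum>(r, c)\<in>{..i} \<times> codes (Suc i). g (r # c))"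
    using sum.reindex[of "\<lambda>(r, c). r # c" _ g] codes_Suc[OF assms] by (simp add: split_def)
  also have "\<dots> = (\<Sum>r\<le>i. \<Sum>c\<in>codes (Suc i). g (r # c))"
    by (simp add: sum.cartesian_product finite_codes)
  finally show ?thesis .
qed

lemma card_codes: "i \<le> N \<Longrightarrow> card (codes i) * fact i = fact N"
proof (induction rule: inc_induct)
  case base then show ?case by (simp add: codes_ge)
next
  case (step n)
  have "card (codes n) = card ({..n} \<times> codes (Suc n))"
    unfolding codes_Suc[OF step(2)] by (rule card_image) (auto simp: inj_on_def)
  then show ?case using step(3) by (simp add: card_cartesian_product algebra_simps)
qed

lemma code_weight_Cons: "code_weight i (r # c) = (if r = i then th else 1) * code_weight (Suc i) c"
  unfolding code_weight_def length_Cons prod.lessThan_Suc_shift by simp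

lemma code_weight_nonneg: "0 \<le> th \<Longrightarrow> 0 \<le> code_weight i c"
  unfolding code_weight_def by (intro prod_nonneg) auto

lemma sum_choice_weight: "(\<Sum>r\<le>i. (if r = i then th else 1) * x) = (th + real i) * x"
  by (simp add: lessThan_Suc_atMost[symmetric] algebra_simps)

lemma recordless_weight_Suc: "m < N \<Longrightarrow> recordless_weight m = real m * recordless_weight (Suc m)"
proof -
  assume m: "m < N"
  have no_record: "(\<forall>j<length (r # c). (r # c) ! j \<noteq> m + j) \<longleftrightarrow>
      r \<noteq> m \<and> (\<forall>j<length c. c ! j \<noteq> Suc m + j)" for r c
    by (auto simp: less_Suc_eq_0_disj)
  have "recordless_weight m = (\<Sum>r\<le>m. if r = m then 0 else recordless_weight (Suc m))"
    unfolding recordless_weight_def sum_codes_Suc[OF m] no_record code_weight_Cons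
    by (intro sum.cong) (auto simp: sum_distrib_left)
  then show ?thesis by (simp add: lessThan_Suc_atMost[symmetric])
qed

lemma recordless_weight_nonneg: "0 \<le> th \<Longrightarrow> 0 \<le> recordless_weight m"
  unfolding recordless_weight_def by (intro sum_nonneg) (auto intro: code_weight_nonneg)

lemma stop_time_Cons:
  assumes "length h = i" "i < N"
  shows "stop_time t i (h @ r # c) =
    (if i = N - 1 \<or> t (h @ [r]) then i else stop_time t (Suc i) (h @ r # c))"
proof -
  have take_eq: "take (Suc i) (h @ r # c) = h @ [r]" using assms by simp
  show ?thesis
  proof (cases "i = N - 1 \<or> t (h @ [r])")
    case True
    then show ?thesis unfolding stop_time_def
      by (intro Least_equality) (auto simp: take_eq simp del: take_append)
  next
    case False
    then have "(\<lambda>j. i \<le> j \<and> (j = N - 1 \<or> t (take (Suc j) (h @ r # c)))) =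
        (\<lambda>j. Suc i \<le> j \<and> (j = N - 1 \<or> t (take (Suc j) (h @ r # c))))"
      by (auto simp: take_eq le_eq_less_or_eq simp del: take_append)
    then show ?thesis using False unfolding stop_time_def by simp
  qed
qed

lemma last_record_Cons:
  assumes "length h = i" "length c = N - Suc i"
  shows "last_record (h @ r # c) i \<longleftrightarrow> r = i \<and> (\<forall>j<length c. c ! j \<noteq> Suc i + j)"
proof -
  have "(\<forall>l. i < l \<and> l < N \<longrightarrow> (h @ r # c) ! l \<noteq> l) \<longleftrightarrow> (\<forall>j<length c. c ! j \<noteq> Suc i + j)"
  proof
    assume no_record: "\<forall>l. i < l \<and> l < N \<longrightarrow> (h @ r # c) ! l \<noteq> l"
    show "\<forall>j<length c. c ! j \<noteq> Suc i + j"
    proof (intro allI impI)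
      fix j assume "j < length c"
      then show "c ! j \<noteq> Suc i + j"
        using no_record[rule_format, of "Suc i + j"] assms by (simp add: nth_append)
    qed
  next
    assume no_record: "\<forall>j<length c. c ! j \<noteq> Suc i + j"
    show "\<forall>l. i < l \<and> l < N \<longrightarrow> (h @ r # c) ! l \<noteq> l"
    proof (intro allI impI)
      fix l assume l: "i < l \<and> l < N"
      define j where "j = l - Suc i"
      have "l = Suc i + j" "j < length c" using l assms unfolding j_def by auto
      then show "(h @ r # c) ! l \<noteq> l" using no_record assms by (simp add: nth_append)
    qed
  qed
  then show ?thesis using assms unfolding last_record_def by (simp add: nth_append)
qed

text \<open>Conditioning on the rank r of candidate i: stopping there wins only at a record
  followed by no further record; otherwise the game restarts one step later.\<close>
lemma success_weight_branch:
  assumes "length h = i" "i < N"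
  shows "(\<Sum>c\<in>codes (Suc i). code_weight i (r # c) *
      of_bool (last_record (h @ r # c) (stop_time t i (h @ r # c)))) =
    (if r = i then th else 1) *
    (if i = N - 1 \<or> t (h @ [r]) then of_bool (r = i) * recordless_weight (Suc i)
     else success_weight t (h @ [r]))"
proof (cases "i = N - 1 \<or> t (h @ [r])")
  case True
  have "last_record (h @ r # c) (stop_time t i (h @ r # c)) \<longleftrightarrow>
      r = i \<and> (\<forall>j<length c. c ! j \<noteq> Suc i + j)" if "c \<in> codes (Suc i)" for c
    using that stop_time_Cons[OF assms] True last_record_Cons[OF assms(1)]
    by (simp add: codes_def)
  then show ?thesis using True
    by (simp add: code_weight_Cons recordless_weight_def sum_distrib_left cong: sum.cong)
      (simp add: mult.assoc)
next
  case False
  then show ?thesis using assms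
    by (simp add: stop_time_Cons code_weight_Cons success_weight_def sum_distrib_left
        mult.assoc)
qed

lemma success_weight_rec:
  assumes "length h = i" "i < N"
  shows "success_weight t h = (\<Sum>r\<le>i. (if r = i then th else 1) *
    (if i = N - 1 \<or> t (h @ [r]) then of_bool (r = i) * recordless_weight (Suc i)
     else success_weight t (h @ [r])))"
proof -
  have "success_weight t h = (\<Sum>r\<le>i. \<Sum>c\<in>codes (Suc i). code_weight i (r # c) *
      of_bool (last_record (h @ r # c) (stop_time t i (h @ r # c))))"
    unfolding success_weight_def assms(1) by (rule sum_codes_Suc[OF assms(2)])
  then show ?thesis using success_weight_branch[OF assms] by simp
qed

text \<open>Bellman value of a history of length i: stopping at candidate i pays only at a
  record (weight th), and then recordless_weight (Suc i) is won.\<close>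
function opt_value :: "nat \<Rightarrow> real" where
  "opt_value i = (if i < N then
     th * max (recordless_weight (Suc i)) (opt_value (Suc i)) + real i * opt_value (Suc i) else 0)"
  by auto
termination by (relation "measure (\<lambda>i. N - i)") auto

function first_record_value :: "nat \<Rightarrow> real" where
  "first_record_value i = (if i < N then
     th * recordless_weight (Suc i) + real i * first_record_value (Suc i) else 0)"
  by auto
termination by (relation "measure (\<lambda>i. N - i)") auto

function threshold_value :: "nat \<Rightarrow> nat \<Rightarrow> real" where
  "threshold_value k i = (if k \<le> i then first_record_value i
     else (th + real i) * threshold_value k (Suc i))"
  by auto
termination by (relation "measure (\<lambda>(k, i). k - i)") auto

declare opt_value.simps[simp del] first_record_value.simps[simp del] threshold_value.simps[simp del]

lemma opt_value_lt: "i < N \<Longrightarrow>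
    opt_value i = th * max (recordless_weight (Suc i)) (opt_value (Suc i)) + real i * opt_value (Suc i)"
  by (subst opt_value.simps) simp

lemma opt_value_N: "opt_value N = 0"
  by (subst opt_value.simps) simp

lemma first_record_value_lt: "i < N \<Longrightarrow>
    first_record_value i = th * recordless_weight (Suc i) + real i * first_record_value (Suc i)"
  by (subst first_record_value.simps) simp

lemma first_record_value_N: "first_record_value N = 0"
  by (subst first_record_value.simps) simp

lemma threshold_value_ge: "k \<le> i \<Longrightarrow> threshold_value k i = first_record_value i"
  by (subst threshold_value.simps) simp

lemma threshold_value_lt: "i < k \<Longrightarrow> threshold_value k i = (th + real i) * threshold_value k (Suc i)"
  by (subst threshold_value.simps) simp

lemma opt_value_nonneg: "0 \<le> th \<Longrightarrow> 0 \<le> opt_value i"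
proof (induction i rule: opt_value.induct)
  case (1 i)
  then show ?case
    using recordless_weight_nonneg[of "Suc i"]
    by (subst opt_value.simps) (auto intro!: add_nonneg_nonneg mult_nonneg_nonneg)
qed

lemma success_weight_le_opt_value:
  assumes "0 \<le> th"
  shows "length h = i \<Longrightarrow> i < N \<Longrightarrow> success_weight t h \<le> opt_value i"
proof (induction i arbitrary: h rule: opt_value.induct)
  case (1 i)
  let ?M = "max (recordless_weight (Suc i)) (opt_value (Suc i))"
  have "success_weight t h \<le> (\<Sum>r\<le>i. if r = i then th * ?M else opt_value (Suc i))"
    unfolding success_weight_rec[OF "1.prems"]
  proof (rule sum_mono)
    fix r
    have "\<not> (i = N - 1 \<or> t (h @ [r])) \<Longrightarrow> success_weight t (h @ [r]) \<le> opt_value (Suc i)"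
      using "1.IH"[of "h @ [r]"] "1.prems" by auto
    then show "(if r = i then th else 1) *
        (if i = N - 1 \<or> t (h @ [r]) then of_bool (r = i) * recordless_weight (Suc i)
         else success_weight t (h @ [r])) \<le> (if r = i then th * ?M else opt_value (Suc i))"
      using opt_value_nonneg[OF assms, of "Suc i"] assms
      by (auto intro: mult_left_mono order.trans[OF _ max.cobounded2])
  qed
  also have "\<dots> = opt_value i"
    using "1.prems" by (simp add: opt_value_lt lessThan_Suc_atMost[symmetric])
  finally show ?case .
qed

definition threshold_rule :: "nat \<Rightarrow> nat list \<Rightarrow> bool" where
  "threshold_rule k h \<longleftrightarrow> k < length h \<and> last h = length h - 1"

lemma threshold_rule_snoc: "threshold_rule k (h @ [r]) \<longleftrightarrow> k \<le> length h \<and> r = length h"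
  by (auto simp: threshold_rule_def)

lemma success_weight_threshold_rule:
  assumes "k < N"
  shows "length h = i \<Longrightarrow> i < N \<Longrightarrow> success_weight (threshold_rule k) h = threshold_value k i"
proof (induction i arbitrary: h rule: opt_value.induct)
  case (1 i)
  have IH: "Suc i < N \<Longrightarrow> success_weight (threshold_rule k) (h @ [r]) = threshold_value k (Suc i)"
    for r using "1.IH"[of "h @ [r]"] "1.prems" by simp
  show ?case
  proof (cases "k \<le> i")
    case True
    have "Suc i = N \<Longrightarrow> threshold_value k (Suc i) = 0"
      using True by (simp add: threshold_value_ge first_record_value_N)
    then have "success_weight (threshold_rule k) h =
        (\<Sum>r\<le>i. if r = i then th * recordless_weight (Suc i) else threshold_value k (Suc i))"
      unfolding success_weight_rec[OF "1.prems"] threshold_rule_snoc using True IH "1.prems"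
      by (intro sum.cong) (auto simp: less_Suc_eq)
    also have "\<dots> = threshold_value k i"
      using True "1.prems" by (simp add: lessThan_Suc_atMost[symmetric] threshold_value_ge
          first_record_value_lt)
    finally show ?thesis .
  next
    case False
    then have "success_weight (threshold_rule k) h =
        (\<Sum>r\<le>i. (if r = i then th else 1) * threshold_value k (Suc i))"
      unfolding success_weight_rec[OF "1.prems"] threshold_rule_snoc using IH "1.prems" assms
      by (intro sum.cong) auto
    also have "\<dots> = threshold_value k i"
      using False by (simp add: sum_choice_weight threshold_value_lt)
    finally show ?thesis .
  qed
qed

lemma first_record_value_closed:
  "i < N \<Longrightarrow> first_record_value (Suc i) = th * recordless_weight (Suc i) * H N i"
proof (induction i rule: opt_value.induct)
  case (1 i)
  show ?case
  proof (cases "Suc i < N")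
    case False
    then have "Suc i = N" using "1.prems" by simp
    moreover have "i = N - 1" using \<open>Suc i = N\<close> by simp
    ultimately show ?thesis using H_last[of N] by (simp add: first_record_value_N)
  next
    case True
    have "first_record_value (Suc i) =
        th * recordless_weight (Suc (Suc i)) + real (Suc i) * first_record_value (Suc (Suc i))"
      using True by (rule first_record_value_lt)
    also have "\<dots> = th * (real (Suc i) * recordless_weight (Suc (Suc i))) *
        (1 / real (Suc i) + H N (Suc i))"
      using "1.IH" True by (simp add: algebra_simps del: of_nat_Suc)
    also have "\<dots> = th * recordless_weight (Suc i) * H N i"
      using H_Suc[OF True] recordless_weight_Suc[OF True] by simp
    finally show ?thesis .
  qed
qed

lemma first_record_value_le_opt_value: "0 \<le> th \<Longrightarrow> first_record_value i \<le> opt_value i"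
proof (induction i rule: opt_value.induct)
  case (1 i)
  show ?case
  proof (cases "i < N")
    case True
    then have "real i * first_record_value (Suc i) \<le> real i * opt_value (Suc i)"
      using 1 by (simp add: mult_left_mono)
    moreover have "th * recordless_weight (Suc i) \<le> th * max (recordless_weight (Suc i)) (opt_value (Suc i))"
      using "1.prems" by (simp add: mult_left_mono)
    ultimately show ?thesis using True by (simp add: first_record_value_lt opt_value_lt)
  next
    case False
    then show ?thesis by (subst first_record_value.simps, subst opt_value.simps) simp
  qed
qed

text \<open>Stopping at a record at position i beats continuing exactly when th * H N i \<le> 1,
  since by the closed form above continuing with the first-record rule is worth
  th * H N i times the stopping reward.\<close>
lemma opt_value_eq_threshold_value:
  assumes th: "0 < th" and k: "k < N"
    and threshold: "\<And>i. Suc i < N \<Longrightarrow> i < k \<longleftrightarrow> 1 < th * H N i"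
  shows "i \<le> N \<Longrightarrow> opt_value i = threshold_value k i"
proof (induction i rule: opt_value.induct)
  case (1 i)
  show ?case
  proof (cases "i < N")
    case False
    then show ?thesis using k "1.prems" by (simp add: threshold_value_ge opt_value_N first_record_value_N)
  next
    case True
    have IH: "opt_value (Suc i) = threshold_value k (Suc i)" using 1 True by simp
    have reward: "0 \<le> recordless_weight (Suc i)" using recordless_weight_nonneg th by simp
    have continue: "first_record_value (Suc i) = (th * H N i) * recordless_weight (Suc i)"
      using first_record_value_closed True by (simp add: mult_ac)
    show ?thesis
    proof (cases "k \<le> i")
      case ki: True
      have "th * H N i \<le> 1"
      proof (cases "Suc i < N")
        case False
        then have "i = N - 1" using True by simp
        then show ?thesis using H_last[of N] by simp
      qed (use threshold[of i] ki in simp)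
      then have "first_record_value (Suc i) \<le> recordless_weight (Suc i)"
        unfolding continue using mult_right_mono[OF _ reward, of _ 1] by simp
      then show ?thesis
        using IH ki True by (simp add: opt_value_lt threshold_value_ge first_record_value_lt max_def)
    next
      case ki: False
      then have "1 < th * H N i" using threshold[of i] k by simp
      then have "recordless_weight (Suc i) \<le> first_record_value (Suc i)"
        unfolding continue using mult_right_mono[OF _ reward, of 1] by simp
      also have "\<dots> \<le> opt_value (Suc i)" using first_record_value_le_opt_value th by simp
      finally have "opt_value i = (th + real i) * opt_value (Suc i)"
        using True by (simp add: opt_value_lt max_def algebra_simps)
      then show ?thesis using IH ki by (simp add: threshold_value_lt)
    qed
  qed
qed

end

section \<open>Rank codes of permutations\<close>

lemma permsD:
  assumes "p \<in> perms N"
  shows "set p = {1..N}" "distinct p" "length p = N"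
proof -
  show "set p = {1..N}" "distinct p" using assms permutations_of_setD unfolding perms_def by auto
  then show "length p = N" using distinct_card[of p] by simp
qed

lemma perms_nth_le: "p \<in> perms N \<Longrightarrow> j < N \<Longrightarrow> p ! j \<le> N"
  using permsD[of p N] nth_mem[of j p] by auto

lemma perms_nonempty: "perms N \<noteq> {}"
proof -
  have "[1..<N+1] \<in> perms N" unfolding perms_def by (rule permutations_of_setI) auto
  then show ?thesis by auto
qed

definition rank :: "nat list \<Rightarrow> nat \<Rightarrow> nat" where
  "rank xs j = card {l. l < j \<and> xs ! l < xs ! j}"

definition rank_code :: "nat list \<Rightarrow> nat list" where
  "rank_code xs = map (rank xs) [0..<length xs]"

lemma rank_le: "rank xs j \<le> j"
proof -
  have "{l. l < j \<and> xs ! l < xs ! j} \<subseteq> {..<j}" by auto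
  then show ?thesis unfolding rank_def using card_mono[of "{..<j}"] by fastforce
qed

lemma is_lrm_iff_rank: "j < length xs \<Longrightarrow> is_lrm xs j \<longleftrightarrow> rank xs j = j"
proof -
  assume j: "j < length xs"
  have sub: "{l. l < j \<and> xs ! l < xs ! j} \<subseteq> {..<j}" by auto
  have "rank xs j = j \<longleftrightarrow> {l. l < j \<and> xs ! l < xs ! j} = {..<j}"
    unfolding rank_def using card_subset_eq[OF _ sub] by (metis card_lessThan finite_lessThan)
  also have "\<dots> \<longleftrightarrow> (\<forall>i<j. xs ! i < xs ! j)" by auto
  finally show ?thesis using j unfolding is_lrm_def by simp
qed

lemma nth_rank_code: "j < length xs \<Longrightarrow> rank_code xs ! j = rank xs j"
  unfolding rank_code_def by simp

lemma length_rank_code [simp]: "length (rank_code xs) = length xs"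
  unfolding rank_code_def by simp

lemma rank_code_in_codes: "length xs = N \<Longrightarrow> rank_code xs \<in> codes N 0"
  unfolding codes_def rank_code_def using rank_le by auto

lemma power_lrm_eq_code_weight: "th ^ lrm xs = code_weight th 0 (rank_code xs)"
proof -
  have "code_weight th 0 (rank_code xs) = (\<Prod>j<length xs. if rank xs j = j then th else 1)"
    unfolding code_weight_def by (simp add: rank_code_def)
  also have "\<dots> = th ^ card ({..<length xs} \<inter> {j. rank xs j = j})"
    by (simp add: prod.If_cases)
  also have "{..<length xs} \<inter> {j. rank xs j = j} = {j. j < length xs \<and> is_lrm xs j}"
    using is_lrm_iff_rank by auto
  finally show ?thesis unfolding lrm_def by simp
qed

lemma eq_if_card_eq_and_nested:
  "finite A \<Longrightarrow> finite B \<Longrightarrow> card A = card B \<Longrightarrow> A \<subseteq> B \<or> B \<subseteq> A \<Longrightarrow> A = B"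
  by (metis card_subset_eq)

lemma smaller_predecessors_eq_of_rank_eq:
  assumes "distinct xs" "i < length xs" "rank xs i = rank ys i"
    and order: "\<forall>a<i. \<forall>b<i. xs ! a < xs ! b \<longleftrightarrow> ys ! a < ys ! b"
  shows "{l. l < i \<and> xs ! l < xs ! i} = {l. l < i \<and> ys ! l < ys ! i}"
proof (rule eq_if_card_eq_and_nested)
  show "card {l. l < i \<and> xs ! l < xs ! i} = card {l. l < i \<and> ys ! l < ys ! i}"
    using assms(3) unfolding rank_def .
  have above: "xs ! i < xs ! b" if "b < i" "\<not> xs ! b < xs ! i" for b
    using that assms(1,2) nth_eq_iff_index_eq[of xs b i] by auto
  have False if a: "a < i" "xs ! a < xs ! i" "\<not> ys ! a < ys ! i"
    and b: "b < i" "ys ! b < ys ! i" "\<not> xs ! b < xs ! i" for a b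
  proof -
    have "xs ! a < xs ! b" using a(2) above[OF b(1,3)] by simp
    then have "ys ! a < ys ! b" using order a(1) b(1) by blast
    then show False using a(3) b(2) by simp
  qed
  then show "{l. l < i \<and> xs ! l < xs ! i} \<subseteq> {l. l < i \<and> ys ! l < ys ! i} \<or>
      {l. l < i \<and> ys ! l < ys ! i} \<subseteq> {l. l < i \<and> xs ! l < xs ! i}"
    by blast
qed auto

lemma less_iff_of_rank_eq:
  assumes "distinct xs" "distinct ys"
  shows "i \<le> length xs \<Longrightarrow> i \<le> length ys \<Longrightarrow> \<forall>j<i. rank xs j = rank ys j \<Longrightarrow>
     \<forall>a<i. \<forall>b<i. xs ! a < xs ! b \<longleftrightarrow> ys ! a < ys ! b"
proof (induction i)
  case 0 then show ?case by simp
next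
  case (Suc i)
  have IH: "\<forall>a<i. \<forall>b<i. xs ! a < xs ! b \<longleftrightarrow> ys ! a < ys ! b" using Suc by simp
  have "{l. l < i \<and> xs ! l < xs ! i} = {l. l < i \<and> ys ! l < ys ! i}"
    using Suc.prems IH by (intro smaller_predecessors_eq_of_rank_eq[OF assms(1)]) auto
  then have below: "xs ! a < xs ! i \<longleftrightarrow> ys ! a < ys ! i" if "a < i" for a
    using that by (metis (mono_tags, lifting) mem_Collect_eq)
  have above: "xs ! i < xs ! a \<longleftrightarrow> ys ! i < ys ! a" if "a < i" for a
  proof -
    have "xs ! a \<noteq> xs ! i" "ys ! a \<noteq> ys ! i"
      using that Suc.prems assms by (simp_all add: nth_eq_iff_index_eq)
    then show ?thesis using below[OF that] by auto
  qed
  show ?case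
  proof (intro allI impI)
    fix a b assume "a < Suc i" "b < Suc i"
    then consider "a < i" "b < i" | "a = i" "b < i" | "a < i" "b = i" | "a = i" "b = i"
      by linarith
    then show "xs ! a < xs ! b \<longleftrightarrow> ys ! a < ys ! b"
    proof cases
      case 1 then show ?thesis using IH by blast
    next
      case 2 then show ?thesis using above by blast
    next
      case 3 then show ?thesis using below by blast
    next
      case 4 then show ?thesis by simp
    qed
  qed
qed

lemma nth_rel_pattern_take:
  assumes "distinct xs" "i \<le> length xs" "j < i"
  shows "rel_pattern (take i xs) ! j = card {l. l < i \<and> xs ! l \<le> xs ! j}"
proof -
  have "{z \<in> set (take i xs). z \<le> xs ! j} = (\<lambda>l. xs ! l) ` {l. l < i \<and> xs ! l \<le> xs ! j}"
    using assms by (force simp: set_conv_nth nth_take)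
  moreover have "inj_on (\<lambda>l. xs ! l) {l. l < i \<and> xs ! l \<le> xs ! j}"
    using assms by (auto simp: inj_on_def nth_eq_iff_index_eq)
  ultimately show ?thesis using assms by (simp add: rel_pattern_def card_image)
qed

lemma rel_pattern_take_eq:
  assumes "distinct p" "distinct q" "i \<le> length p" "i \<le> length q"
    and "\<forall>j<i. rank p j = rank q j"
  shows "rel_pattern (take i p) = rel_pattern (take i q)"
proof (rule nth_equalityI)
  show "length (rel_pattern (take i p)) = length (rel_pattern (take i q))"
    using assms by (simp add: rel_pattern_def)
  have "\<forall>a<i. \<forall>b<i. p ! a < p ! b \<longleftrightarrow> q ! a < q ! b"
    using less_iff_of_rank_eq assms by blast
  then have "{l. l < i \<and> p ! l \<le> p ! j} = {l. l < i \<and> q ! l \<le> q ! j}" if "j < i" for j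
    using that by (auto simp: not_less[symmetric])
  then show "rel_pattern (take i p) ! j = rel_pattern (take i q) ! j"
    if "j < length (rel_pattern (take i p))" for j
    using that nth_rel_pattern_take[of p i j] nth_rel_pattern_take[of q i j] assms
    by (simp add: rel_pattern_def)
qed

lemma rel_pattern_perm: "p \<in> perms N \<Longrightarrow> rel_pattern p = p"
proof -
  assume p: "p \<in> perms N"
  have "card {z \<in> set p. z \<le> y} = y" if "y \<in> set p" for y
  proof -
    have "{z \<in> set p. z \<le> y} = {1..y}" using permsD[OF p] that by auto
    then show ?thesis by simp
  qed
  then show ?thesis by (simp add: rel_pattern_def map_idI)
qed

lemma inj_on_rank_code: "inj_on rank_code (perms N)"
proof (rule inj_onI)
  fix p q assume p: "p \<in> perms N" and q: "q \<in> perms N" and eq: "rank_code p = rank_code q"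
  have "\<forall>j<N. rank p j = rank q j"
    using eq permsD[OF p] permsD[OF q] nth_rank_code by metis
  then have "rel_pattern (take N p) = rel_pattern (take N q)"
    using rel_pattern_take_eq[of p q N] permsD[OF p] permsD[OF q] by simp
  then show "p = q" using permsD[OF p] permsD[OF q] rel_pattern_perm[OF p] rel_pattern_perm[OF q]
    by simp
qed

lemma bij_betw_rank_code: "bij_betw rank_code (perms N) (codes N 0)"
proof -
  have sub: "rank_code ` perms N \<subseteq> codes N 0" using rank_code_in_codes permsD by blast
  have "card (rank_code ` perms N) = fact N"
    using card_image[OF inj_on_rank_code] by (simp add: perms_def)
  also have "\<dots> = card (codes N 0)" using card_codes[of 0 N] by simp
  finally have "rank_code ` perms N = codes N 0"
    by (intro card_subset_eq[OF finite_codes sub])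
  then show ?thesis using inj_on_rank_code by (simp add: bij_betw_def)
qed

section \<open>Strategies on permutations and on codes\<close>

lemma max_entry_is_last_lrm:
  assumes p: "p \<in> perms N" and j: "j < N" and max: "p ! j = N"
  shows "is_lrm p j \<and> (\<forall>l. j < l \<and> l < N \<longrightarrow> \<not> is_lrm p l)"
proof -
  have "p ! i < p ! j" if "i < j" for i
  proof -
    have "p ! i \<noteq> p ! j" using permsD[OF p] that j nth_eq_iff_index_eq[of p i j] by simp
    then show ?thesis using perms_nth_le[OF p, of i] that j max by simp
  qed
  moreover have "\<not> is_lrm p l" if "j < l" "l < N" for l
    using that perms_nth_le[OF p, of l] max unfolding is_lrm_def by auto
  ultimately show ?thesis using j permsD[OF p] unfolding is_lrm_def by auto
qed

lemma last_lrm_iff_max_entry: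
  assumes p: "p \<in> perms N" and j: "j < N"
  shows "is_lrm p j \<and> (\<forall>l. j < l \<and> l < N \<longrightarrow> \<not> is_lrm p l) \<longleftrightarrow> p ! j = N"
proof
  assume last: "is_lrm p j \<and> (\<forall>l. j < l \<and> l < N \<longrightarrow> \<not> is_lrm p l)"
  have "N \<in> set p" using permsD[OF p] j by auto
  then obtain m where m: "m < N" "p ! m = N" using permsD[OF p] by (metis in_set_conv_nth)
  have "\<not> j < m" using last max_entry_is_last_lrm[OF p m] m by blast
  moreover have "\<not> m < j" using last m perms_nth_le[OF p j] unfolding is_lrm_def by fastforce
  ultimately show "p ! j = N" using m by (metis linorder_neqE_nat)
qed (use max_entry_is_last_lrm[OF assms] in blast)

lemma last_record_rank_code_iff:
  assumes p: "p \<in> perms N" and j: "j < N"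
  shows "last_record N (rank_code p) j \<longleftrightarrow> p ! j = N"
proof -
  have "rank_code p ! l = l \<longleftrightarrow> is_lrm p l" if "l < N" for l
    using that permsD[OF p] nth_rank_code is_lrm_iff_rank by metis
  then have "last_record N (rank_code p) j \<longleftrightarrow>
      is_lrm p j \<and> (\<forall>l. j < l \<and> l < N \<longrightarrow> \<not> is_lrm p l)"
    unfolding last_record_def using j by auto
  then show ?thesis using last_lrm_iff_max_entry[OF assms] by simp
qed

lemma Least_eq_if_agree_below:
  fixes P Q :: "nat \<Rightarrow> bool"
  assumes "P w" "Q w" "\<forall>j\<le>w. P j \<longleftrightarrow> Q j"
  shows "(LEAST j. P j) = (LEAST j. Q j)"
proof -
  have le: "(LEAST j. P j) \<le> w" "(LEAST j. Q j) \<le> w" using assms by (auto intro: Least_le)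
  have "P (LEAST j. P j)" "Q (LEAST j. Q j)" using assms by (auto intro: LeastI)
  then have "Q (LEAST j. P j)" "P (LEAST j. Q j)" using assms(3) le by auto
  then show ?thesis by (metis Least_le le_antisym)
qed

lemma stop_time_less: "1 \<le> N \<Longrightarrow> stop_time N t 0 rs < N"
  using Least_le[of "\<lambda>j. 0 \<le> j \<and> (j = N - 1 \<or> t (take (Suc j) rs))" "N - 1"]
  unfolding stop_time_def by simp

lemma sum_perms_eq_success_weight:
  assumes "\<And>p. p \<in> perms N \<Longrightarrow>
      P p \<longleftrightarrow> last_record N (rank_code p) (stop_time N t 0 (rank_code p))"
  shows "(\<Sum>p\<in>{p \<in> perms N. P p}. th ^ lrm p) = success_weight N th t []"
proof -
  have "(\<Sum>p\<in>{p \<in> perms N. P p}. th ^ lrm p) = (\<Sum>p\<in>perms N. if P p then th ^ lrm p else 0)"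
    unfolding perms_def by (rule sum.inter_filter) simp
  also have "\<dots> = (\<Sum>p\<in>perms N. (\<lambda>rs. code_weight th 0 rs *
      of_bool (last_record N rs (stop_time N t 0 rs))) (rank_code p))"
    using assms power_lrm_eq_code_weight by (intro sum.cong) auto
  also have "\<dots> = (\<Sum>rs\<in>codes N 0. code_weight th 0 rs *
      of_bool (last_record N rs (stop_time N t 0 rs)))"
    by (rule sum.reindex_bij_betw[OF bij_betw_rank_code])
  finally show ?thesis unfolding success_weight_def by simp
qed

lemma stop_index_eq_stop_time:
  assumes N: "1 \<le> N"
    and agree: "\<And>i. 1 \<le> i \<Longrightarrow> i \<le> N \<Longrightarrow> s (rel_pattern (take i p)) = t (take i (rank_code p))"
  shows "stop_index N s p = Suc (stop_time N t 0 (rank_code p))"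
proof -
  have "stop_index N s p =
      Suc (LEAST m. 1 \<le> Suc m \<and> (Suc m = N \<or> s (rel_pattern (take (Suc m) p))))"
    unfolding stop_index_def by (rule Least_Suc[of _ N]) (use N in auto)
  also have "(LEAST m. 1 \<le> Suc m \<and> (Suc m = N \<or> s (rel_pattern (take (Suc m) p)))) =
      (LEAST j. 0 \<le> j \<and> (j = N - 1 \<or> t (take (Suc j) (rank_code p))))"
    using N agree by (intro Least_eq_if_agree_below[of _ "N - 1"]) auto
  finally show ?thesis unfolding stop_time_def .
qed

lemma sum_wins_eq_success_weight:
  assumes N: "1 \<le> N"
    and agree: "\<And>p i. p \<in> perms N \<Longrightarrow> 1 \<le> i \<Longrightarrow> i \<le> N \<Longrightarrow>
        s (rel_pattern (take i p)) = t (take i (rank_code p))"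
  shows "(\<Sum>p\<in>{p \<in> perms N. wins N s p}. th ^ lrm p) = success_weight N th t []"
proof (rule sum_perms_eq_success_weight)
  fix p assume p: "p \<in> perms N"
  then have "wins N s p \<longleftrightarrow> p ! stop_time N t 0 (rank_code p) = N"
    unfolding wins_def using stop_index_eq_stop_time[where s = s and t = t, OF N agree[OF p]] by simp
  then show "wins N s p \<longleftrightarrow> last_record N (rank_code p) (stop_time N t 0 (rank_code p))"
    using last_record_rank_code_iff[OF p stop_time_less[OF N]] by simp
qed

text \<open>Any strategy only sees the relative order of a prefix, which is determined by the
  corresponding prefix of the rank code; so it can be rewritten as a rule on codes.\<close>
definition code_strategy :: "nat \<Rightarrow> strategy \<Rightarrow> nat list \<Rightarrow> bool" where
  "code_strategy N s h =
     s (rel_pattern (take (length h) (SOME q. q \<in> perms N \<and> take (length h) (rank_code q) = h)))"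

lemma code_strategy_agrees:
  assumes p: "p \<in> perms N" and i: "i \<le> N"
  shows "s (rel_pattern (take i p)) = code_strategy N s (take i (rank_code p))"
proof -
  define h where "h = take i (rank_code p)"
  have len_h: "length h = i" using permsD[OF p] i unfolding h_def by simp
  define q where "q = (SOME q. q \<in> perms N \<and> take i (rank_code q) = h)"
  have "\<exists>q. q \<in> perms N \<and> take i (rank_code q) = h" using p unfolding h_def by blast
  then have "q \<in> perms N \<and> take i (rank_code q) = h" unfolding q_def by (rule someI_ex)
  then have q: "q \<in> perms N" "take i (rank_code q) = h" by auto
  have "rank q j = rank p j" if "j < i" for j
    using arg_cong[OF q(2), of "\<lambda>xs. xs ! j"] that i permsD[OF p] permsD[OF q(1)]
    unfolding h_def by (simp add: nth_rank_code)
  then have "rel_pattern (take i q) = rel_pattern (take i p)"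
    using rel_pattern_take_eq[of q p i] permsD[OF p] permsD[OF q(1)] i by simp
  then show ?thesis unfolding code_strategy_def h_def[symmetric] len_h q_def[symmetric] by simp
qed

lemma last_rel_pattern_take:
  assumes "distinct p" "j < length p"
  shows "last (rel_pattern (take (Suc j) p)) = Suc (rank p j)"
proof -
  have "{l. l < Suc j \<and> p ! l \<le> p ! j} = insert j {l. l < j \<and> p ! l < p ! j}"
    using assms nth_eq_iff_index_eq[of p _ j] by (auto simp: less_Suc_eq order_le_less)
  then have "card {l. l < Suc j \<and> p ! l \<le> p ! j} = Suc (rank p j)"
    unfolding rank_def by simp
  moreover have "rel_pattern (take (Suc j) p) \<noteq> []" "length (rel_pattern (take (Suc j) p)) = Suc j"
    using assms by (auto simp: rel_pattern_def)
  ultimately show ?thesis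
    using nth_rel_pattern_take[OF assms(1), of "Suc j" j] assms by (simp add: last_conv_nth)
qed

lemma last_take_rank_code: "j < length xs \<Longrightarrow> last (take (Suc j) (rank_code xs)) = rank xs j"
  by (simp add: take_Suc_conv_app_nth nth_rank_code)

lemma threshold_rule_take_rank_code:
  "j < length xs \<Longrightarrow> threshold_rule k (take (Suc j) (rank_code xs)) \<longleftrightarrow> k \<le> j \<and> rank xs j = j"
  by (simp add: threshold_rule_def last_take_rank_code less_Suc_eq_le)

lemma pos_strategy_eq_threshold_rule:
  assumes p: "p \<in> perms N" and i: "1 \<le> i" "i \<le> N"
  shows "pos_strategy k (rel_pattern (take i p)) = threshold_rule k (take i (rank_code p))"
proof -
  obtain j where j: "i = Suc j" using i by (cases i) auto
  then have "j < length p" using i permsD[OF p] by simp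
  moreover have "length (rel_pattern (take i p)) = i" using i permsD[OF p] by (simp add: rel_pattern_def)
  ultimately show ?thesis
    using last_rel_pattern_take[of p j] threshold_rule_take_rank_code[of j p k] permsD[OF p] j
    by (simp add: pos_strategy_def less_Suc_eq_le)
qed

lemma stop_time_threshold_rule:
  assumes p: "p \<in> perms N" and N: "1 \<le> N"
  shows "stop_time N (threshold_rule k) 0 (rank_code p) = (LEAST j. j = N - 1 \<or> k \<le> j \<and> is_lrm p j)"
  unfolding stop_time_def
proof (rule Least_eq_if_agree_below[of _ "N - 1"])
  have "j < length p" if "j \<le> N - 1" for j using that N permsD[OF p] by simp
  then show "\<forall>j\<le>N - 1. (0 \<le> j \<and> (j = N - 1 \<or> threshold_rule k (take (Suc j) (rank_code p)))) \<longleftrightarrow>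
      (j = N - 1 \<or> k \<le> j \<and> is_lrm p j)"
    using threshold_rule_take_rank_code is_lrm_iff_rank by auto
qed simp_all

lemma k_winnable_iff_first_lrm:
  assumes p: "p \<in> perms N" and k: "k \<le> N - 1" and N: "1 \<le> N"
  defines "stop \<equiv> LEAST j. j = N - 1 \<or> k \<le> j \<and> is_lrm p j"
  shows "k_winnable N k p \<longleftrightarrow> p ! stop = N"
proof
  assume "k_winnable N k p"
  then obtain j where j: "k \<le> j" "j < N" "is_lrm p j" "p ! j = N"
      and before: "\<forall>i. k \<le> i \<and> i < j \<longrightarrow> \<not> is_lrm p i"
    unfolding k_winnable_def by blast
  have "stop = j" unfolding stop_def
  proof (rule Least_equality)
    fix y assume y: "y = N - 1 \<or> k \<le> y \<and> is_lrm p y"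
    show "j \<le> y"
    proof (rule ccontr)
      assume "\<not> j \<le> y"
      then show False using y j before by auto
    qed
  qed (use j in simp)
  then show "p ! stop = N" using j by simp
next
  assume max: "p ! stop = N"
  have stop: "stop = N - 1 \<or> k \<le> stop \<and> is_lrm p stop"
    unfolding stop_def by (rule LeastI[of _ "N - 1"]) simp
  have "stop \<le> N - 1" unfolding stop_def by (rule Least_le) simp
  then have "stop < N" using N by simp
  moreover have "k \<le> stop" using stop k by auto
  moreover have "\<not> is_lrm p i" if "k \<le> i" "i < stop" for i
  proof -
    have "\<not> (i = N - 1 \<or> k \<le> i \<and> is_lrm p i)"
      using that(2) unfolding stop_def by (rule not_less_Least)
    then show ?thesis using that(1) by simp
  qed
  moreover have "is_lrm p stop" using max_entry_is_last_lrm[OF p \<open>stop < N\<close> max] by simp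
  ultimately show "k_winnable N k p" unfolding k_winnable_def using max by blast
qed

lemma W_eq_success_weight:
  assumes N: "1 \<le> N" and k: "k \<le> N - 1"
  shows "W th N k = success_weight N th (threshold_rule k) []"
  unfolding W_def
proof (rule sum_perms_eq_success_weight)
  fix p assume p: "p \<in> perms N"
  show "k_winnable N k p \<longleftrightarrow>
      last_record N (rank_code p) (stop_time N (threshold_rule k) 0 (rank_code p))"
    using k_winnable_iff_first_lrm[OF p k N]
      last_record_rank_code_iff[OF p stop_time_less[OF N, of "threshold_rule k" "rank_code p"]]
    unfolding stop_time_threshold_rule[OF p N] by simp
qed

section \<open>Optimality of the positional strategy\<close>

lemma sum_wins_pos_strategy_eq_W:
  assumes "1 \<le> N" "k \<le> N - 1"
  shows "(\<Sum>p\<in>{p \<in> perms N. wins N (pos_strategy k) p}. th ^ lrm p) = W th N k"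
  using sum_wins_eq_success_weight[where s = "pos_strategy k" and t = "threshold_rule k",
      OF assms(1) pos_strategy_eq_threshold_rule]
    W_eq_success_weight[OF assms] by simp

lemma sum_wins_le_opt_value:
  assumes "1 \<le> N" "0 \<le> th"
  shows "(\<Sum>p\<in>{p \<in> perms N. wins N s p}. th ^ lrm p) \<le> opt_value N th 0"
  using sum_wins_eq_success_weight[where s = s and t = "code_strategy N s",
      OF assms(1) code_strategy_agrees]
    success_weight_le_opt_value[OF assms(2), of "[]" 0] assms(1) by simp

lemma W_kappa_eq_opt_value:
  assumes N: "2 \<le> N" and th: "0 < th"
  shows "W th N (kappa N th) = opt_value N th 0"
proof -
  have kappa: "kappa N th < N" by (rule kappa_less[OF N th])
  have "W th N (kappa N th) = success_weight N th (threshold_rule (kappa N th)) []"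
    using W_eq_success_weight[of N "kappa N th"] kappa N by simp
  also have "\<dots> = threshold_value N th (kappa N th) 0"
    using success_weight_threshold_rule[OF kappa, of "[]" 0] N by simp
  also have "\<dots> = opt_value N th 0"
    using opt_value_eq_threshold_value[OF th kappa less_kappa_iff[OF N th]] by simp
  finally show ?thesis .
qed

lemma win_prob_le_kappa:
  assumes N: "2 \<le> N" and th: "0 < th"
  shows "win_prob th N s \<le> win_prob th N (pos_strategy (kappa N th))"
proof -
  have "(\<Sum>p\<in>{p \<in> perms N. wins N s p}. th ^ lrm p) \<le>
      (\<Sum>p\<in>{p \<in> perms N. wins N (pos_strategy (kappa N th)) p}. th ^ lrm p)"
    using sum_wins_le_opt_value[of N th s] sum_wins_pos_strategy_eq_W[of N "kappa N th" th]
      W_kappa_eq_opt_value[OF N th] kappa_less[OF N th] N th by simp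
  moreover have "0 < (\<Sum>p\<in>perms N. th ^ lrm p)"
    using th perms_nonempty[of N] by (intro sum_pos) (auto simp: perms_def)
  ultimately show ?thesis unfolding win_prob_def by (intro divide_right_mono) auto
qed

theorem corollary4p6:
  fixes N :: nat
  assumes "N \<ge> 2"
  shows "(\<forall>\<theta>::real. \<theta> > 0 \<longrightarrow>
            (\<forall>k. k \<le> N - 1 \<longrightarrow> W \<theta> N (kappa N \<theta>) \<ge> W \<theta> N k) \<and>
            (\<forall>s::strategy. win_prob \<theta> N (pos_strategy (kappa N \<theta>)) \<ge> win_prob \<theta> N s))
         \<and> (\<forall>\<theta>1 \<theta>2::real. 0 < \<theta>1 \<longrightarrow> \<theta>1 \<le> \<theta>2 \<longrightarrow> kappa N \<theta>1 \<le> kappa N \<theta>2)"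
proof (intro conjI allI impI)
  fix th :: real and k assume th: "0 < th" and k: "k \<le> N - 1"
  show "W th N k \<le> W th N (kappa N th)"
    using sum_wins_le_opt_value[of N th "pos_strategy k"] sum_wins_pos_strategy_eq_W[OF _ k]
      W_kappa_eq_opt_value[OF assms th] assms th by simp
next
  fix th :: real and s assume "0 < th"
  then show "win_prob th N s \<le> win_prob th N (pos_strategy (kappa N th))"
    by (rule win_prob_le_kappa[OF assms])
next
  fix th1 th2 :: real assume "0 < th1" and "th1 \<le> th2"
  then show "kappa N th1 \<le> kappa N th2" by (rule kappa_mono[OF assms])
qed

end
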